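(* Consider the setting in the context and the linear system $$\dot q_2=-J_2q_2+\tilde\kappa\left(TP_{\mathcal{S}^\perp}\tilde M B^TT^{-1}\right)_{(n-2\times n-2)}q_2,\qquad q_2\in\mathbb{C}^{n-2}.$$ Let $Q\in\mathbb{C}^{(n-2)\times(n-2)}$ be a Hermitian positive definite matrix with $QJ_2+J_2^HQ\succeq 2I_{n-2}$ ($X^H$ the conjugate transpose). If $$0\le\tilde\kappa<\Big(\big\|Q\left(T\tilde MB^TT^{-1}\right)_{(n-2\times n-2)}\big\|_2\Big)^{-1},$$ then this system is exponentially stable.
   Context: Let $n\ge 3$ agents on an undirected graph $\mathcal{G}=(\mathcal{V},\mathcal{E})$, $\mathcal{V}=\{1,\dots,n\}$, $\mathcal{N}_i=\{j:(i,j)\in\mathcal{E}\}$. Let $p^*\in\mathbb{C}^n$ be a reference shape (not a multiple of the all-ones vector $\mathbf{1}_n$), and let $L$ be the complex Laplacian with nonzero weights $\omega_{ij}$ ($L_{ii}=\sum_{k\in\mathcal{N}_i}\omega_{ik}$, $L_{ij}=-\omega_{ij}$ for $j\in\mathcal{N}_i$, $0$ otherwise) satisfying $\sum_{j\in\mathcal{N}_i}\omega_{ij}(p^*_i-p^*_j)=0$ for all $i$, with $0$ an eigenvalue of $L$ of algebraic and geometric multiplicity 2 and eigenspace $\mathcal{S}=\operatorname{span}\{\mathbf{1}_n,p^*\}$. Let $K=\operatorname{diag}(k_i)$, $k_i\in\mathbb{C}\setminus\{0\}$, be such that all eigenvalues of $KL$ other than the two zero eigenvalues have positive real part, so $\operatorname{Ker}(KL)=\mathcal{S}$.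 Let $J=TKLT^{-1}=\operatorname{diag}(J_1,J_2)$ be a Jordan form of $KL$ with invertible $T$, where $J_1=0\in\mathbb{C}^{2\times2}$ corresponds to the zero eigenvalues and $J_2\in\mathbb{C}^{(n-2)\times(n-2)}$ (so $-J_2$ is Hurwitz). Let $\mathcal{S}^\perp$ be the orthogonal complement of $\operatorname{Ker}(KL)$ and $P_{\mathcal{S}^\perp}$ the orthogonal projection onto it. Let $B$ be the incidence matrix of an orientation of $\mathcal{G}$ ($b_{ik}=+1$ if $i$ is the tail of edge $k$, $-1$ if $i$ is its head, $0$ otherwise) and $\tilde M=\kappa_tM_t+\kappa_rM_r+\kappa_sM_s$ with fixed $\kappa_t,\kappa_r,\kappa_s>0$, where for motion parameters $\mu_{ij}\in\mathbb{C}$ ($\mu_{ij}=0$ if $j\notin\mathcal{N}_i$) the matrix $M$ has entries $m_{ik}=\mu_{i,\mathrm{head}_k}$ if $i$ is the tail of edge $k$, $m_{ik}=-\mu_{i,\mathrm{tail}_k}$ if $i$ is its head, $0$ otherwise, so that $(MB^Tx)_i=\sum_{j\in\mathcal{N}_i}\mu_{ij}(x_i-x_j)$; $M_t,M_r,M_s$ are built from translation, rotation and scaling parameters satisfying $M_tB^Tp^*=v^*\mathbf{1}_n$, $M_rB^Tp^*=\iota\omega p^*$, $M_sB^Tp^*=ap^*$ for given $v^*\in\mathbb{C}$, $a,\omega\in\mathbb{R}$. For $X\in\mathbb{C}^{n\times n}$, $(X)_{(n-2\times n-2)}$ denotes the submatrix obtained by deleting the first two rows and the first two columns. $\|\cdot\|_2$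 is the spectral norm. *)

theory Defs
  imports Complex_Main "Jordan_Normal_Form.Jordan_Normal_Form" "Jordan_Normal_Form.Schur_Decomposition"
begin

definition cinner :: "complex vec \<Rightarrow> complex vec \<Rightarrow> complex" where
  "cinner v w = (\<Sum>i<dim_vec v. v $ i * cnj (w $ i))"

definition cvnorm :: "complex vec \<Rightarrow> real" where
  "cvnorm v = sqrt (\<Sum>i<dim_vec v. (cmod (v $ i))\<^sup>2)"

definition spec_norm :: "complex mat \<Rightarrow> real" where
  "spec_norm A = Sup {cvnorm (A *\<^sub>v v) | v. v \<in> carrier_vec (dim_col A) \<and> cvnorm v \<le> 1}"

definition undirected_graph :: "nat \<Rightarrow> (nat \<times> nat) set \<Rightarrow> bool" where
  "undirected_graph n E \<longleftrightarrow> E \<subseteq> {0..<n} \<times> {0..<n} \<and> (\<forall>i j. (i,j) \<in> E \<longrightarrow> (j,i) \<in> E)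
     \<and> (\<forall>i. (i,i) \<notin> E)"

definition nbrs :: "(nat \<times> nat) set \<Rightarrow> nat \<Rightarrow> nat set" where
  "nbrs E i = {j. (i,j) \<in> E}"

definition cLaplacian :: "nat \<Rightarrow> (nat \<times> nat) set \<Rightarrow> (nat \<Rightarrow> nat \<Rightarrow> complex) \<Rightarrow> complex mat" where
  "cLaplacian n E w = mat n n (\<lambda>(i,j). if i = j then (\<Sum>k\<in>nbrs E i. w i k)
                                       else if j \<in> nbrs E i then - w i j else 0)"

(* an orientation of the undirected graph: list of (tail, head) pairs, one per undirected edge *)
definition orientation :: "(nat \<times> nat) set \<Rightarrow> (nat \<times> nat) list \<Rightarrow> bool" where
  "orientation E ed \<longleftrightarrow> distinct ed \<and> set ed \<subseteq> E
     \<and> (\<forall>(i,j)\<in>E. (i,j) \<in> set ed \<or> (j,i) \<in> set ed)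
     \<and> (\<forall>(i,j)\<in>set ed. (j,i) \<notin> set ed)"

definition incidence :: "nat \<Rightarrow> (nat \<times> nat) list \<Rightarrow> complex mat" where
  "incidence n ed = mat n (length ed) (\<lambda>(i,k). if i = fst (ed ! k) then 1
                                            else if i = snd (ed ! k) then -1 else 0)"

definition motion_mat :: "nat \<Rightarrow> (nat \<times> nat) list \<Rightarrow> (nat \<Rightarrow> nat \<Rightarrow> complex) \<Rightarrow> complex mat" where
  "motion_mat n ed mu = mat n (length ed) (\<lambda>(i,k). if i = fst (ed ! k) then mu i (snd (ed ! k))
                                            else if i = snd (ed ! k) then - mu i (fst (ed ! k)) else 0)"

definition del2 :: "complex mat \<Rightarrow> complex mat" where
  "del2 X = mat (dim_row X - 2) (dim_col X - 2) (\<lambda>(i,j). X $$ (i+2, j+2))"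

definition hermitian :: "complex mat \<Rightarrow> bool" where
  "hermitian A \<longleftrightarrow> A \<in> carrier_mat (dim_row A) (dim_row A) \<and> mat_adjoint A = A"

definition pos_def :: "complex mat \<Rightarrow> bool" where
  "pos_def A \<longleftrightarrow> hermitian A \<and>
     (\<forall>v \<in> carrier_vec (dim_row A). v \<noteq> 0\<^sub>v (dim_row A) \<longrightarrow> Re (cinner v (A *\<^sub>v v)) > 0)"

definition pos_semidef :: "complex mat \<Rightarrow> bool" where
  "pos_semidef A \<longleftrightarrow> hermitian A \<and>
     (\<forall>v \<in> carrier_vec (dim_row A). Re (cinner v (A *\<^sub>v v)) \<ge> 0)"

definition loewner_ge :: "complex mat \<Rightarrow> complex mat \<Rightarrow> bool" where
  "loewner_ge A B \<longleftrightarrow> pos_semidef (A - B)"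

definition orth_proj_perp :: "nat \<Rightarrow> complex vec set \<Rightarrow> complex mat \<Rightarrow> bool" where
  "orth_proj_perp n S P \<longleftrightarrow> P \<in> carrier_mat n n \<and>
     (\<forall>v \<in> carrier_vec n. (\<forall>s\<in>S. cinner (P *\<^sub>v v) s = 0) \<and> v - P *\<^sub>v v \<in> S)"

definition lin_solution :: "complex mat \<Rightarrow> (real \<Rightarrow> complex vec) \<Rightarrow> bool" where
  "lin_solution A x \<longleftrightarrow> (\<forall>t\<ge>0. x t \<in> carrier_vec (dim_row A)) \<and>
     (\<forall>t\<ge>0. \<forall>i<dim_row A.
        ((\<lambda>s. x s $ i) has_vector_derivative ((A *\<^sub>v x t) $ i)) (at t within {0..}))"

definition exp_stable :: "complex mat \<Rightarrow> bool" where
  "exp_stable A \<longleftrightarrow> (\<exists>c lam. lam > 0 \<and> (\<forall>x. lin_solution A x \<longrightarrow>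
       (\<forall>t\<ge>0. cvnorm (x t) \<le> c * exp (- lam * t) * cvnorm (x 0))))"

end

theory Submission
  imports Defs "HOL-Analysis.L2_Norm"
begin

(* In the Jordan basis T the kernel S of KL is carried into the first two coordinates,
   because J2 has no zero eigenvalue.  Hence the rows of T P and of T agree from the
   third row on, and the projection drops out: the system matrix is -J2 + kappa X with
   X = (T M B^T T^-1)_(n-2 x n-2).  For the Lyapunov function V(q) = q^H Q q one gets
   V' <= -2 (1 - kappa ||Q X||) |q|^2, while Q J2 + J2^H Q >= 2 I also makes V comparable
   with |q|^2; hence V, and with it q, decays exponentially. *)

section \<open>Hermitian inner product and spectral norm\<close>

lemma mult_mat_vec_sum:
  "A \<in> carrier_mat r c \<Longrightarrow> v \<in> carrier_vec c \<Longrightarrow> i < r \<Longrightarrow> (A *\<^sub>v v) $ i = (\<Sum>j<c. A $$ (i, j) * v $ j)"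
  by (auto simp: scalar_prod_def lessThan_atLeast0 intro!: sum.cong)

lemma smult_mult_mat_vec: "A \<in> carrier_mat r c \<Longrightarrow> v \<in> carrier_vec c \<Longrightarrow> (k \<cdot>\<^sub>m A) *\<^sub>v v = k \<cdot>\<^sub>v (A *\<^sub>v v)"
  for A :: "complex mat"
  by (intro eq_vecI) (auto simp: scalar_prod_def sum_distrib_left mult.assoc)

lemma mult_mat_vec_uminus: "A \<in> carrier_mat r c \<Longrightarrow> v \<in> carrier_vec c \<Longrightarrow> A *\<^sub>v (- v) = - (A *\<^sub>v v)"
  for A :: "complex mat"
  by (intro eq_vecI) auto

lemma cvnorm_nonneg: "0 \<le> cvnorm v"
  unfolding cvnorm_def by (simp add: sum_nonneg)

lemma cvnorm_power2: "(cvnorm v)\<^sup>2 = (\<Sum>i<dim_vec v. (cmod (v $ i))\<^sup>2)"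
  unfolding cvnorm_def by (simp add: sum_nonneg)

lemma cvnorm_eq_0_iff: "v \<in> carrier_vec m \<Longrightarrow> cvnorm v = 0 \<longleftrightarrow> v = 0\<^sub>v m"
  unfolding cvnorm_def by (auto simp: sum_nonneg_eq_0_iff)

lemma cvnorm_smult: "cvnorm (c \<cdot>\<^sub>v v) = cmod c * cvnorm v"
  unfolding cvnorm_def
  by (simp add: norm_mult power_mult_distrib real_sqrt_mult flip: sum_distrib_left)

lemma cinner_self: "cinner v v = of_real ((cvnorm v)\<^sup>2)"
  unfolding cvnorm_power2 cinner_def by (simp flip: complex_norm_square)

lemma cinner_commute: "dim_vec u = dim_vec v \<Longrightarrow> cinner v u = cnj (cinner u v)"
  unfolding cinner_def by (simp add: mult.commute)

lemma cinner_add_right: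
  "u \<in> carrier_vec m \<Longrightarrow> v \<in> carrier_vec m \<Longrightarrow> w \<in> carrier_vec m \<Longrightarrow>
    cinner w (u + v) = cinner w u + cinner w v"
  unfolding cinner_def by (simp add: distrib_left sum.distrib)

lemma cinner_diff_left:
  "u \<in> carrier_vec m \<Longrightarrow> v \<in> carrier_vec m \<Longrightarrow> w \<in> carrier_vec m \<Longrightarrow>
    cinner (u - v) w = cinner u w - cinner v w"
  unfolding cinner_def by (simp add: left_diff_distrib sum_subtractf)

lemma cinner_diff_right:
  "u \<in> carrier_vec m \<Longrightarrow> v \<in> carrier_vec m \<Longrightarrow> w \<in> carrier_vec m \<Longrightarrow>
    cinner w (u - v) = cinner w u - cinner w v"
  unfolding cinner_def by (simp add: right_diff_distrib sum_subtractf)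

lemma cinner_smult_left: "cinner (c \<cdot>\<^sub>v u) v = c * cinner u v"
  unfolding cinner_def by (simp add: sum_distrib_left mult_ac)

lemma cinner_smult_right: "dim_vec v = dim_vec u \<Longrightarrow> cinner u (c \<cdot>\<^sub>v v) = cnj c * cinner u v"
  unfolding cinner_def by (auto simp: sum_distrib_left mult_ac intro!: sum.cong)

lemma cinner_Cauchy_Schwarz:
  assumes "dim_vec w = dim_vec v"
  shows "cmod (cinner v w) \<le> cvnorm v * cvnorm w"
proof -
  have "cmod (cinner v w) \<le> (\<Sum>i<dim_vec v. \<bar>cmod (v $ i)\<bar> * \<bar>cmod (w $ i)\<bar>)"
    unfolding cinner_def by (rule order_trans[OF norm_sum]) (simp add: norm_mult)
  also have "\<dots> \<le> cvnorm v * cvnorm w"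
    using L2_set_mult_ineq[of "\<lambda>i. cmod (v $ i)" "\<lambda>i. cmod (w $ i)"] assms
    by (simp only: cvnorm_def L2_set_def)
  finally show ?thesis .
qed

lemma cinner_mult_mat_vec_left:
  assumes A: "A \<in> carrier_mat r c" and u: "u \<in> carrier_vec c" and v: "v \<in> carrier_vec r"
  shows "cinner (A *\<^sub>v u) v = cinner u (mat_adjoint A *\<^sub>v v)"
proof -
  have adj: "mat_adjoint A \<in> carrier_mat c r" "\<And>i j. i < c \<Longrightarrow> j < r \<Longrightarrow> mat_adjoint A $$ (i, j) = cnj (A $$ (j, i))"
    using A unfolding mat_adjoint_def by (auto simp: mat_of_rows_def)
  have "cinner (A *\<^sub>v u) v = (\<Sum>i<r. \<Sum>j<c. u $ j * (A $$ (i, j) * cnj (v $ i)))"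
    unfolding cinner_def using A u v
    by (simp add: mult_mat_vec_sum[OF A u] sum_distrib_left sum_distrib_right mult_ac
        del: index_mult_mat_vec)
  also have "\<dots> = (\<Sum>j<c. \<Sum>i<r. u $ j * (A $$ (i, j) * cnj (v $ i)))"
    by (rule sum.swap)
  also have "\<dots> = cinner u (mat_adjoint A *\<^sub>v v)"
    unfolding cinner_def using u v adj
    by (simp add: mult_mat_vec_sum[OF adj(1) v] sum_distrib_left mult_ac del: index_mult_mat_vec)
  finally show ?thesis .
qed

definition frobenius_norm :: "complex mat \<Rightarrow> real" where
  "frobenius_norm A = sqrt (\<Sum>i<dim_row A. \<Sum>j<dim_col A. (cmod (A $$ (i, j)))\<^sup>2)"

lemma cvnorm_mult_mat_vec_le_frobenius:
  assumes A: "A \<in> carrier_mat r c" and v: "v \<in> carrier_vec c"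
  shows "cvnorm (A *\<^sub>v v) \<le> frobenius_norm A * cvnorm v"
proof -
  define R where "R i = sqrt (\<Sum>j<c. (cmod (A $$ (i, j)))\<^sup>2)" for i
  have row_bound: "cmod ((A *\<^sub>v v) $ i) \<le> R i * cvnorm v" if "i < r" for i
  proof -
    have "cmod ((A *\<^sub>v v) $ i) \<le> (\<Sum>j<c. \<bar>cmod (A $$ (i, j))\<bar> * \<bar>cmod (v $ j)\<bar>)"
      using A v that
      by (simp add: mult_mat_vec_sum norm_mult order_trans[OF norm_sum] del: index_mult_mat_vec)
    also have "\<dots> \<le> R i * cvnorm v"
      using L2_set_mult_ineq[of "\<lambda>j. cmod (A $$ (i, j))" "\<lambda>j. cmod (v $ j)"] v
      by (simp only: R_def cvnorm_def L2_set_def carrier_vecD)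
    finally show ?thesis .
  qed
  have "(cvnorm (A *\<^sub>v v))\<^sup>2 \<le> (\<Sum>i<r. (R i * cvnorm v)\<^sup>2)"
    using A row_bound by (auto simp: cvnorm_power2 intro!: sum_mono power_mono)
  also have "\<dots> = (frobenius_norm A * cvnorm v)\<^sup>2"
    using A by (simp add: R_def frobenius_norm_def power_mult_distrib sum_nonneg flip: sum_distrib_right)
  finally show ?thesis
    by (rule power2_le_imp_le) (simp add: frobenius_norm_def cvnorm_nonneg sum_nonneg)
qed

lemma spec_norm_set_bdd_above:
  "bdd_above {cvnorm (A *\<^sub>v v) | v. v \<in> carrier_vec (dim_col A) \<and> cvnorm v \<le> 1}"
proof (rule bdd_aboveI)
  fix x assume "x \<in> {cvnorm (A *\<^sub>v v) | v. v \<in> carrier_vec (dim_col A) \<and> cvnorm v \<le> 1}"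
  then obtain v where v: "v \<in> carrier_vec (dim_col A)" "cvnorm v \<le> 1" and x: "x = cvnorm (A *\<^sub>v v)"
    by blast
  have "x \<le> frobenius_norm A * cvnorm v"
    unfolding x by (rule cvnorm_mult_mat_vec_le_frobenius[OF carrier_matI[OF refl refl] v(1)])
  also have "\<dots> \<le> frobenius_norm A"
    using v(2) by (intro mult_left_le) (simp_all add: frobenius_norm_def sum_nonneg)
  finally show "x \<le> frobenius_norm A" .
qed

lemma spec_norm_nonneg: "0 \<le> spec_norm A"
proof -
  have "0\<^sub>v (dim_col A) \<in> carrier_vec (dim_col A)" "cvnorm (0\<^sub>v (dim_col A)) \<le> 1"
    by (auto simp: cvnorm_def)
  then have "cvnorm (A *\<^sub>v 0\<^sub>v (dim_col A)) \<le> spec_norm A"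
    unfolding spec_norm_def by (intro cSup_upper[OF _ spec_norm_set_bdd_above]) blast
  then show ?thesis by (simp add: cvnorm_def)
qed

lemma cvnorm_mult_mat_vec_le:
  assumes A: "A \<in> carrier_mat r c" and v: "v \<in> carrier_vec c"
  shows "cvnorm (A *\<^sub>v v) \<le> spec_norm A * cvnorm v"
proof (cases "v = 0\<^sub>v c")
  case True
  then show ?thesis using A by (simp add: cvnorm_def)
next
  case False
  then have pos: "cvnorm v > 0"
    using cvnorm_eq_0_iff[OF v] cvnorm_nonneg[of v] by linarith
  define u where "u = complex_of_real (1 / cvnorm v) \<cdot>\<^sub>v v"
  have "u \<in> carrier_vec (dim_col A)" "cvnorm u \<le> 1"
    using A v pos by (auto simp: u_def cvnorm_smult norm_divide)
  then have "cvnorm (A *\<^sub>v u) \<le> spec_norm A"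
    unfolding spec_norm_def by (intro cSup_upper[OF _ spec_norm_set_bdd_above]) blast
  moreover have "cvnorm (A *\<^sub>v u) = cvnorm (A *\<^sub>v v) / cvnorm v"
    using A v pos by (simp add: u_def mult_mat_vec cvnorm_smult norm_divide)
  ultimately show ?thesis
    using pos by (simp add: divide_le_eq mult.commute)
qed

lemma Re_cinner_mult_mat_vec_le:
  assumes A: "A \<in> carrier_mat m m" and w: "w \<in> carrier_vec m"
  shows "Re (cinner w (A *\<^sub>v w)) \<le> spec_norm A * (cvnorm w)\<^sup>2"
proof -
  have "Re (cinner w (A *\<^sub>v w)) \<le> cmod (cinner w (A *\<^sub>v w))"
    by (rule complex_Re_le_cmod)
  also have "\<dots> \<le> cvnorm w * cvnorm (A *\<^sub>v w)"
    using A w by (intro cinner_Cauchy_Schwarz) auto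
  also have "\<dots> \<le> cvnorm w * (spec_norm A * cvnorm w)"
    by (intro mult_left_mono cvnorm_mult_mat_vec_le[OF A w] cvnorm_nonneg)
  finally show ?thesis by (simp add: power2_eq_square mult_ac)
qed

section \<open>Quadratic Lyapunov functions\<close>

lemma pos_def_imp_pos_semidef:
  assumes Q: "pos_def Q"
  shows "pos_semidef Q"
  unfolding pos_semidef_def
proof (intro conjI ballI)
  show "hermitian Q" using Q by (simp add: pos_def_def)
  fix v :: "complex vec" assume v: "v \<in> carrier_vec (dim_row Q)"
  show "0 \<le> Re (cinner v (Q *\<^sub>v v))"
  proof (cases "v = 0\<^sub>v (dim_row Q)")
    case True
    then show ?thesis by (simp add: cinner_def)
  next
    case False
    then show ?thesis using Q v by (simp add: pos_def_def less_imp_le)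
  qed
qed

lemma hermitian_cinner_commute:
  assumes Q: "Q \<in> carrier_mat m m" "hermitian Q" and u: "u \<in> carrier_vec m" and v: "v \<in> carrier_vec m"
  shows "cinner v (Q *\<^sub>v u) = cnj (cinner u (Q *\<^sub>v v))"
proof -
  have "cinner v (Q *\<^sub>v u) = cinner (Q *\<^sub>v v) u"
    using cinner_mult_mat_vec_left[OF Q(1) v u] Q(2) by (simp add: hermitian_def)
  also have "\<dots> = cnj (cinner u (Q *\<^sub>v v))"
    using Q(1) u v by (intro cinner_commute) auto
  finally show ?thesis .
qed

lemma pos_semidef_cinner_le:
  assumes Q: "Q \<in> carrier_mat m m" "pos_semidef Q" and u: "u \<in> carrier_vec m" and v: "v \<in> carrier_vec m"
  shows "2 * Re (cinner u (Q *\<^sub>v v)) \<le> Re (cinner u (Q *\<^sub>v u)) + Re (cinner v (Q *\<^sub>v v))"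
proof -
  have herm: "hermitian Q" using Q(2) by (simp add: pos_semidef_def)
  have "0 \<le> Re (cinner (u - v) (Q *\<^sub>v (u - v)))"
    using Q u v by (simp add: pos_semidef_def)
  also have "cinner (u - v) (Q *\<^sub>v (u - v))
      = cinner u (Q *\<^sub>v u) - cinner u (Q *\<^sub>v v) - cinner v (Q *\<^sub>v u) + cinner v (Q *\<^sub>v v)"
    using Q(1) u v by (simp add: mult_minus_distrib_mat_vec cinner_diff_left[of _ m] cinner_diff_right[of _ m])
  also have "cinner v (Q *\<^sub>v u) = cnj (cinner u (Q *\<^sub>v v))"
    by (rule hermitian_cinner_commute[OF Q(1) herm u v])
  finally show ?thesis by simp
qed

lemma loewner_ge_lyapunov_cinner:
  assumes J: "J \<in> carrier_mat m m" and Q: "Q \<in> carrier_mat m m" "hermitian Q"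
    and lyap: "loewner_ge (Q * J + mat_adjoint J * Q) (2 \<cdot>\<^sub>m 1\<^sub>m m)" and w: "w \<in> carrier_vec m"
  shows "(cvnorm w)\<^sup>2 \<le> Re (cinner w (Q *\<^sub>v (J *\<^sub>v w)))"
proof -
  have JH: "mat_adjoint J \<in> carrier_mat m m"
    using J unfolding mat_adjoint_def by auto
  have "0 \<le> Re (cinner w ((Q * J + mat_adjoint J * Q - 2 \<cdot>\<^sub>m 1\<^sub>m m) *\<^sub>v w))"
    using lyap w unfolding loewner_ge_def pos_semidef_def by simp
  also have "(Q * J + mat_adjoint J * Q - 2 \<cdot>\<^sub>m 1\<^sub>m m) *\<^sub>v w
      = Q *\<^sub>v (J *\<^sub>v w) + mat_adjoint J *\<^sub>v (Q *\<^sub>v w) - 2 \<cdot>\<^sub>v w"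
    using J Q JH w
    by (simp add: minus_mult_distrib_mat_vec[of _ m m] add_mult_distrib_mat_vec[of _ m m]
        smult_mult_mat_vec[of _ m m])
  also have "cinner w (Q *\<^sub>v (J *\<^sub>v w) + mat_adjoint J *\<^sub>v (Q *\<^sub>v w) - 2 \<cdot>\<^sub>v w)
      = cinner w (Q *\<^sub>v (J *\<^sub>v w)) + cinner w (mat_adjoint J *\<^sub>v (Q *\<^sub>v w)) - 2 * cinner w w"
    using J Q JH w
    by (simp add: cinner_diff_right[of _ m] cinner_add_right[of _ m] cinner_smult_right)
  also have "cinner w (mat_adjoint J *\<^sub>v (Q *\<^sub>v w)) = cnj (cinner w (Q *\<^sub>v (J *\<^sub>v w)))"
    using cinner_mult_mat_vec_left[OF J w, of "Q *\<^sub>v w"] hermitian_cinner_commute[OF Q _ w, of "J *\<^sub>v w"]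
      Q(1) J w by simp
  finally show ?thesis by (simp add: cinner_self)
qed

lemma pos_semidef_coercive_of_lyapunov:
  assumes J: "J \<in> carrier_mat m m" and Q: "Q \<in> carrier_mat m m" "pos_semidef Q"
    and lyap: "\<And>w. w \<in> carrier_vec m \<Longrightarrow> (cvnorm w)\<^sup>2 \<le> Re (cinner w (Q *\<^sub>v (J *\<^sub>v w)))"
  obtains c where "c > 0" "\<And>w. w \<in> carrier_vec m \<Longrightarrow> c * (cvnorm w)\<^sup>2 \<le> Re (cinner w (Q *\<^sub>v w))"
proof -
  \<comment> \<open>No compactness argument: testing the form on K w and J w gives
    2 K |w|^2 <= K^2 <w, Q w> + <J w, Q J w> <= K^2 <w, Q w> + K |w|^2.\<close>
  define K where "K = spec_norm Q * (spec_norm J)\<^sup>2 + 1"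
  have K: "K > 0"
    unfolding K_def using spec_norm_nonneg[of Q] by (simp add: add_nonneg_pos)
  have "(cvnorm w)\<^sup>2 \<le> K * Re (cinner w (Q *\<^sub>v w))" if w: "w \<in> carrier_vec m" for w
  proof -
    define Kw where "Kw = complex_of_real K \<cdot>\<^sub>v w"
    have Kw: "Kw \<in> carrier_vec m" and Jw: "J *\<^sub>v w \<in> carrier_vec m"
      using J w by (auto simp: Kw_def)
    have QKw: "Q *\<^sub>v Kw = complex_of_real K \<cdot>\<^sub>v (Q *\<^sub>v w)"
      using Q(1) w by (simp add: Kw_def mult_mat_vec)
    have "2 * K * (cvnorm w)\<^sup>2 \<le> 2 * Re (cinner Kw (Q *\<^sub>v (J *\<^sub>v w)))"
      using lyap[OF w] K by (simp add: Kw_def cinner_smult_left)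
    also have "\<dots> \<le> Re (cinner Kw (Q *\<^sub>v Kw)) + Re (cinner (J *\<^sub>v w) (Q *\<^sub>v (J *\<^sub>v w)))"
      by (rule pos_semidef_cinner_le[OF Q Kw Jw])
    also have "Re (cinner Kw (Q *\<^sub>v Kw)) = K\<^sup>2 * Re (cinner w (Q *\<^sub>v w))"
      unfolding QKw using Q(1) w
      by (simp add: Kw_def cinner_smult_left cinner_smult_right power2_eq_square)
    also have "Re (cinner (J *\<^sub>v w) (Q *\<^sub>v (J *\<^sub>v w))) \<le> spec_norm Q * (cvnorm (J *\<^sub>v w))\<^sup>2"
      by (rule Re_cinner_mult_mat_vec_le[OF Q(1) Jw])
    also have "\<dots> \<le> spec_norm Q * (spec_norm J * cvnorm w)\<^sup>2"
      by (intro mult_left_mono power_mono cvnorm_mult_mat_vec_le[OF J w] cvnorm_nonneg spec_norm_nonneg)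
    also have "\<dots> \<le> K * (cvnorm w)\<^sup>2"
      unfolding K_def by (simp add: algebra_simps)
    finally have "K * (cvnorm w)\<^sup>2 \<le> K * (K * Re (cinner w (Q *\<^sub>v w)))"
      by (simp add: power2_eq_square algebra_simps)
    then show ?thesis using K by simp
  qed
  then show thesis
    using K by (intro that[of "1 / K"]) (auto simp: field_simps)
qed

lemma exp_decay_of_deriv_le:
  fixes V V' :: "real \<Rightarrow> real"
  assumes deriv: "\<And>s. s \<ge> 0 \<Longrightarrow> (V has_real_derivative V' s) (at s within {0..})"
    and bound: "\<And>s. s \<ge> 0 \<Longrightarrow> V' s \<le> - lam * V s" and t: "t \<ge> 0"
  shows "V t \<le> exp (- lam * t) * V 0"
proof -
  define g where "g s = exp (lam * s) * V s" for s
  define g' where "g' s = exp (lam * s) * (lam * V s + V' s)" for s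
  have g_deriv: "(g has_real_derivative g' s) (at s within {0..})" if "s \<ge> 0" for s
    unfolding g_def g'_def
    by (rule derivative_eq_intros deriv[OF that] refl)+ (simp add: algebra_simps)
  have "continuous_on {0..} g"
    unfolding continuous_on_eq_continuous_within using g_deriv DERIV_continuous by blast
  then have cont: "continuous_on {0..t} g"
    by (rule continuous_on_subset) auto
  have "g t \<le> g 0"
  proof (rule DERIV_nonpos_imp_decreasing_open[OF t _ cont])
    fix s :: real assume s: "0 < s" "s < t"
    have "(g has_real_derivative g' s) (at s within {0<..})"
      using s by (intro DERIV_subset[OF g_deriv]) auto
    then have "(g has_real_derivative g' s) (at s)"
      using s at_within_open[of s "{0<..}"] by simp
    moreover have "g' s \<le> 0"
      using bound[of s] s unfolding g'_def by (simp add: mult_nonneg_nonpos)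
    ultimately show "\<exists>y. (g has_real_derivative y) (at s) \<and> y \<le> 0" by blast
  qed
  then have "exp (- lam * t) * g t \<le> exp (- lam * t) * V 0"
    by (simp add: g_def)
  then show ?thesis
    by (simp add: g_def mult.assoc[symmetric] flip: exp_add)
qed

lemma quadratic_form_has_real_derivative:
  assumes A: "A \<in> carrier_mat m m" and Q: "Q \<in> carrier_mat m m"
    and x: "lin_solution A x" and t: "t \<ge> 0"
  shows "((\<lambda>s. Re (cinner (x s) (Q *\<^sub>v x s))) has_real_derivative
      Re (cinner (A *\<^sub>v x t) (Q *\<^sub>v x t) + cinner (x t) (Q *\<^sub>v (A *\<^sub>v x t)))) (at t within {0..})"
proof -
  have xs: "x s \<in> carrier_vec m" if "s \<ge> 0" for s
    using x that A unfolding lin_solution_def by auto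
  have dx: "((\<lambda>s. x s $ i) has_vector_derivative (A *\<^sub>v x t) $ i) (at t within {0..})" if "i < m" for i
    using x t A that unfolding lin_solution_def by auto
  define f where "f s = (\<Sum>i<m. x s $ i * cnj (\<Sum>j<m. Q $$ (i, j) * x s $ j))" for s
  have f: "f s = cinner (x s) (Q *\<^sub>v x s)" if "s \<ge> 0" for s
    using xs[OF that] Q unfolding f_def cinner_def
    by (simp add: mult_mat_vec_sum[OF Q xs[OF that]] del: index_mult_mat_vec)
  let ?y = "A *\<^sub>v x t"
  have y: "?y \<in> carrier_vec m" using A xs[OF t] by auto
  have "(f has_vector_derivative
      (\<Sum>i<m. x t $ i * cnj (\<Sum>j<m. Q $$ (i, j) * ?y $ j) + ?y $ i * cnj (\<Sum>j<m. Q $$ (i, j) * x t $ j)))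
      (at t within {0..})"
    unfolding f_def
    by (intro has_vector_derivative_sum has_vector_derivative_mult has_vector_derivative_cnj
        has_vector_derivative_mult_right dx) auto
  also have "(\<Sum>i<m. x t $ i * cnj (\<Sum>j<m. Q $$ (i, j) * ?y $ j) + ?y $ i * cnj (\<Sum>j<m. Q $$ (i, j) * x t $ j))
      = cinner ?y (Q *\<^sub>v x t) + cinner (x t) (Q *\<^sub>v ?y)"
    using xs[OF t] y A unfolding cinner_def
    by (simp add: mult_mat_vec_sum[OF Q xs[OF t]] mult_mat_vec_sum[OF Q y] sum.distrib add.commute
        del: index_mult_mat_vec)
  finally have "((\<lambda>s. Re (f s)) has_real_derivative Re (cinner ?y (Q *\<^sub>v x t) + cinner (x t) (Q *\<^sub>v ?y)))
      (at t within {0..})"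
    unfolding has_real_derivative_iff_has_vector_derivative
    by (rule bounded_linear.has_vector_derivative[OF bounded_linear_Re])
  then show ?thesis
    by (rule has_field_derivative_transform_within[where d = 1]) (use t f in auto)
qed

lemma exp_stable_of_lyapunov:
  assumes A: "A \<in> carrier_mat m m" and Q: "Q \<in> carrier_mat m m" "hermitian Q"
    and c: "c > 0" and coercive: "\<And>w. w \<in> carrier_vec m \<Longrightarrow> c * (cvnorm w)\<^sup>2 \<le> Re (cinner w (Q *\<^sub>v w))"
    and eps: "eps > 0"
    and decrease: "\<And>w. w \<in> carrier_vec m \<Longrightarrow> Re (cinner w (Q *\<^sub>v (A *\<^sub>v w))) \<le> - eps * (cvnorm w)\<^sup>2"
  shows "exp_stable A"
proof -
  define C where "C = spec_norm Q + 1"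
  have C: "C > 0"
    unfolding C_def using spec_norm_nonneg[of Q] by simp
  have bounded: "Re (cinner w (Q *\<^sub>v w)) \<le> C * (cvnorm w)\<^sup>2" if "w \<in> carrier_vec m" for w
    using Re_cinner_mult_mat_vec_le[OF Q(1) that] zero_le_power2[of "cvnorm w"]
    unfolding C_def distrib_right by linarith
  define lam where "lam = 2 * eps / C"
  have decay: "Re (cinner (x t) (Q *\<^sub>v x t)) \<le> exp (- lam * t) * Re (cinner (x 0) (Q *\<^sub>v x 0))"
    if x: "lin_solution A x" and t: "t \<ge> 0" for x t
  proof (rule exp_decay_of_deriv_le[OF _ _ t])
    fix s :: real assume s: "s \<ge> 0"
    have xs: "x s \<in> carrier_vec m" and Axs: "A *\<^sub>v x s \<in> carrier_vec m"
      using x s A unfolding lin_solution_def by auto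
    have "cinner (A *\<^sub>v x s) (Q *\<^sub>v x s) = cnj (cinner (x s) (Q *\<^sub>v (A *\<^sub>v x s)))"
      by (rule hermitian_cinner_commute[OF Q xs Axs])
    then show "((\<lambda>s. Re (cinner (x s) (Q *\<^sub>v x s))) has_real_derivative
        2 * Re (cinner (x s) (Q *\<^sub>v (A *\<^sub>v x s)))) (at s within {0..})"
      using quadratic_form_has_real_derivative[OF A Q(1) x s] by simp
    have "2 * Re (cinner (x s) (Q *\<^sub>v (A *\<^sub>v x s))) \<le> - lam * (C * (cvnorm (x s))\<^sup>2)"
      using decrease[OF xs] C by (simp add: lam_def)
    also have "\<dots> \<le> - lam * Re (cinner (x s) (Q *\<^sub>v x s))"
      using mult_left_mono[OF bounded[OF xs], of lam] C eps by (simp add: lam_def)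
    finally show "2 * Re (cinner (x s) (Q *\<^sub>v (A *\<^sub>v x s))) \<le> - lam * Re (cinner (x s) (Q *\<^sub>v x s))" .
  qed
  show ?thesis
    unfolding exp_stable_def
  proof (intro exI conjI allI impI)
    show "lam / 2 > 0"
      using eps C by (simp add: lam_def)
    fix x t assume x: "lin_solution A x" and t: "(t::real) \<ge> 0"
    have xs: "x s \<in> carrier_vec m" if "s \<ge> 0" for s
      using x that A unfolding lin_solution_def by auto
    have exp_half: "exp (- lam * t) = (exp (- (lam / 2) * t))\<^sup>2"
      by (simp add: power2_eq_square flip: exp_add)
    have "c * (cvnorm (x t))\<^sup>2 \<le> Re (cinner (x t) (Q *\<^sub>v x t))"
      by (rule coercive[OF xs[OF t]])
    also have "\<dots> \<le> exp (- lam * t) * Re (cinner (x 0) (Q *\<^sub>v x 0))"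
      by (rule decay[OF x t])
    also have "\<dots> \<le> exp (- lam * t) * (C * (cvnorm (x 0))\<^sup>2)"
      by (rule mult_left_mono[OF bounded[OF xs]]) simp_all
    finally have "(cvnorm (x t))\<^sup>2 \<le> (sqrt (C / c) * exp (- (lam / 2) * t) * cvnorm (x 0))\<^sup>2"
      using c C unfolding exp_half by (simp add: field_simps)
    then show "cvnorm (x t) \<le> sqrt (C / c) * exp (- (lam / 2) * t) * cvnorm (x 0)"
      by (rule power2_le_imp_le) (use c C in \<open>simp add: cvnorm_nonneg\<close>)
  qed
qed

lemma exp_stable_lyapunov_perturbation:
  assumes J: "J \<in> carrier_mat m m" and X: "X \<in> carrier_mat m m"
    and Q: "Q \<in> carrier_mat m m" "pos_def Q"
    and lyap: "loewner_ge (Q * J + mat_adjoint J * Q) (2 \<cdot>\<^sub>m 1\<^sub>m m)"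
    and kappa: "0 \<le> kappa" "kappa * spec_norm (Q * X) < 1"
  shows "exp_stable (- J + complex_of_real kappa \<cdot>\<^sub>m X)"
proof -
  have psd: "pos_semidef Q" by (rule pos_def_imp_pos_semidef[OF Q(2)])
  then have herm: "hermitian Q" by (simp add: pos_semidef_def)
  have J_form: "(cvnorm w)\<^sup>2 \<le> Re (cinner w (Q *\<^sub>v (J *\<^sub>v w)))" if "w \<in> carrier_vec m" for w
    by (rule loewner_ge_lyapunov_cinner[OF J Q(1) herm lyap that])
  obtain c where c: "c > 0" "\<And>w. w \<in> carrier_vec m \<Longrightarrow> c * (cvnorm w)\<^sup>2 \<le> Re (cinner w (Q *\<^sub>v w))"
    using pos_semidef_coercive_of_lyapunov[OF J Q(1) psd J_form] by blast
  let ?A = "- J + complex_of_real kappa \<cdot>\<^sub>m X"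
  show ?thesis
  proof (rule exp_stable_of_lyapunov[OF _ Q(1) herm c])
    show "?A \<in> carrier_mat m m" using J X by simp
    show "1 - kappa * spec_norm (Q * X) > 0" using kappa by simp
    fix w :: "complex vec" assume w: "w \<in> carrier_vec m"
    have QA: "Q *\<^sub>v (?A *\<^sub>v w) = complex_of_real kappa \<cdot>\<^sub>v ((Q * X) *\<^sub>v w) - Q *\<^sub>v (J *\<^sub>v w)"
      using J X Q(1) w
      by (simp add: add_mult_distrib_mat_vec[of _ m m] smult_mult_mat_vec[of _ m m] mult_mat_vec[of _ m m]
          mult_add_distrib_mat_vec[of _ m m] mult_mat_vec_uminus[of _ m m] minus_add_uminus_vec[of _ m]
          comm_add_vec[of _ m])
    have "Re (cinner w (Q *\<^sub>v (?A *\<^sub>v w)))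
        = kappa * Re (cinner w ((Q * X) *\<^sub>v w)) - Re (cinner w (Q *\<^sub>v (J *\<^sub>v w)))"
      unfolding QA using J X Q(1) w by (simp add: cinner_diff_right[of _ m] cinner_smult_right)
    also have "\<dots> \<le> kappa * (spec_norm (Q * X) * (cvnorm w)\<^sup>2) - (cvnorm w)\<^sup>2"
      using mult_left_mono[OF Re_cinner_mult_mat_vec_le[OF mult_carrier_mat[OF Q(1) X] w] kappa(1)]
        J_form[OF w] by linarith
    finally show "Re (cinner w (Q *\<^sub>v (?A *\<^sub>v w))) \<le> - (1 - kappa * spec_norm (Q * X)) * (cvnorm w)\<^sup>2"
      by (simp add: algebra_simps)
  qed
qed

section \<open>Splitting off the zero eigenvalues\<close>

lemma jordan_matrix_two_zero_blocks_dim: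
  assumes "jordan_matrix ((1, 0) # (1, 0) # n_as) \<in> carrier_mat n n"
  shows "n = sum_list (map fst n_as) + 2"
  using carrier_matD(1)[OF assms] carrier_matD(1)[OF jordan_matrix_carrier[of "(1, 0) # (1, 0) # n_as"]]
  by simp

lemma jordan_matrix_two_zero_blocks_entry:
  assumes "i < sum_list (map fst n_as)" and "j < sum_list (map fst n_as) + 2"
  shows "jordan_matrix ((1, 0) # (1, 0) # n_as) $$ (i + 2, j)
    = (if j < 2 then 0 else jordan_matrix n_as $$ (i, j - 2))"
  using assms by (auto simp: jordan_matrix_Cons jordan_block_def numeral_2_eq_2)

lemma jordan_matrix_two_zero_blocks_mult_vec:
  fixes n_as :: "(nat \<times> complex) list"
  assumes N: "N = sum_list (map fst n_as)" and u: "u \<in> carrier_vec (N + 2)" and k: "k < N"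
  shows "(jordan_matrix ((1, 0) # (1, 0) # n_as) *\<^sub>v u) $ (k + 2)
    = (jordan_matrix n_as *\<^sub>v vec N (\<lambda>j. u $ (j + 2))) $ k"
proof -
  let ?J = "jordan_matrix ((1, 0) # (1, 0) # n_as)"
  have J: "?J \<in> carrier_mat (N + 2) (N + 2)"
    using jordan_matrix_carrier[of "(1, 0) # (1, 0) # n_as"] N by simp
  have J2: "jordan_matrix n_as \<in> carrier_mat N N"
    using N by simp
  have "(?J *\<^sub>v u) $ (k + 2) = (\<Sum>j<Suc (Suc N). ?J $$ (k + 2, j) * u $ j)"
    using mult_mat_vec_sum[OF J u] k by simp
  also have "\<dots> = (\<Sum>j<N. ?J $$ (k + 2, j + 2) * u $ (j + 2))"
    using jordan_matrix_two_zero_blocks_entry[of k n_as] k N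
    by (simp add: sum.lessThan_Suc_shift del: sum.lessThan_Suc)
  also have "\<dots> = (\<Sum>j<N. jordan_matrix n_as $$ (k, j) * vec N (\<lambda>j. u $ (j + 2)) $ j)"
    using jordan_matrix_two_zero_blocks_entry[of k n_as] k N by simp
  also have "\<dots> = (jordan_matrix n_as *\<^sub>v vec N (\<lambda>j. u $ (j + 2))) $ k"
    by (rule mult_mat_vec_sum[OF J2 _ k, symmetric]) simp
  finally show ?thesis .
qed

lemma jordan_matrix_two_zero_blocks_char_poly:
  fixes n_as :: "(nat \<times> complex) list"
  assumes order: "Polynomial.order 0 (char_poly (jordan_matrix ((1, 0) # (1, 0) # n_as))) = 2"
  shows "poly (char_poly (jordan_matrix n_as)) 0 \<noteq> 0"
proof -
  let ?p = "char_poly (jordan_matrix n_as)"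
  have p: "?p \<noteq> 0"
    using degree_monic_char_poly[OF jordan_matrix_carrier, of n_as] by (metis coeff_0 zero_neq_one)
  have x: "[:- 0, 1:] ^ 1 \<noteq> (0 :: complex poly)"
    by simp
  have "char_poly (jordan_matrix ((1, 0) # (1, 0) # n_as)) = [:- 0, 1:] ^ 1 * ([:- 0, 1:] ^ 1 * ?p)"
    by (simp only: jordan_matrix_char_poly) simp
  also have "Polynomial.order 0 \<dots> = 1 + (1 + Polynomial.order 0 ?p)"
    using p x by (simp only: order_mult mult_eq_0_iff order_power_n_n de_Morgan_disj not_False_eq_True)
  finally have "Polynomial.order 0 (char_poly (jordan_matrix ((1, 0) # (1, 0) # n_as)))
      = 2 + Polynomial.order 0 ?p" by simp
  then show ?thesis
    using order p by (simp add: order_root)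
qed

lemma jordan_matrix_two_zero_blocks_kernel:
  fixes n_as :: "(nat \<times> complex) list"
  assumes order: "Polynomial.order 0 (char_poly (jordan_matrix ((1, 0) # (1, 0) # n_as))) = 2"
    and N: "N = sum_list (map fst n_as)" and u: "u \<in> carrier_vec (N + 2)"
    and ker: "jordan_matrix ((1, 0) # (1, 0) # n_as) *\<^sub>v u = 0\<^sub>v (N + 2)" and k: "k < N"
  shows "u $ (k + 2) = 0"
proof -
  define v where "v = vec N (\<lambda>j. u $ (j + 2))"
  have J2: "jordan_matrix n_as \<in> carrier_mat N N"
    using N by simp
  have Jv: "jordan_matrix n_as *\<^sub>v v = 0 \<cdot>\<^sub>v v"
  proof (rule eq_vecI)
    fix i assume "i < dim_vec (0 \<cdot>\<^sub>v v)"
    then show "(jordan_matrix n_as *\<^sub>v v) $ i = (0 \<cdot>\<^sub>v v) $ i"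
      using jordan_matrix_two_zero_blocks_mult_vec[OF N u, of i] ker by (simp add: v_def)
  qed (simp add: N v_def)
  have "v = 0\<^sub>v N"
  proof (rule ccontr)
    assume "v \<noteq> 0\<^sub>v N"
    moreover have "v \<in> carrier_vec N"
      by (simp add: v_def)
    ultimately have "eigenvector (jordan_matrix n_as) v 0"
      using Jv N by (simp add: eigenvector_def)
    then have "eigenvalue (jordan_matrix n_as) 0"
      unfolding eigenvalue_def by blast
    then show False
      using jordan_matrix_two_zero_blocks_char_poly[OF order] eigenvalue_root_char_poly[OF J2] by simp
  qed
  then have "v $ k = 0"
    using k by simp
  then show ?thesis
    using k by (simp add: v_def)
qed

lemma jordan_basis_kernel_tail_zero:
  fixes C T Tinv :: "complex mat" and n_as :: "(nat \<times> complex) list"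
  assumes C: "C \<in> carrier_mat n n" and T: "T \<in> carrier_mat n n" and Tinv: "Tinv \<in> carrier_mat n n"
    and inv: "T * Tinv = 1\<^sub>m n" "Tinv * T = 1\<^sub>m n"
    and jordan: "T * C * Tinv = jordan_matrix ((1, 0) # (1, 0) # n_as)"
    and order: "Polynomial.order 0 (char_poly C) = 2"
    and s: "s \<in> carrier_vec n" and ker: "C *\<^sub>v s = 0\<^sub>v n" and r: "2 \<le> r" "r < n"
  shows "(T *\<^sub>v s) $ r = 0"
proof -
  let ?J = "jordan_matrix ((1, 0) # (1, 0) # n_as)"
  define N where "N = sum_list (map fst n_as)"
  have "?J \<in> carrier_mat n n"
    unfolding jordan[symmetric] using C T Tinv by simp
  then have n: "n = N + 2"
    unfolding N_def by (rule jordan_matrix_two_zero_blocks_dim)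
  have "similar_mat_wit ?J C T Tinv"
    using \<open>?J \<in> carrier_mat n n\<close> C T Tinv inv
    unfolding similar_mat_wit_def Let_def carrier_matD(1)[OF \<open>?J \<in> carrier_mat n n\<close>] jordan[symmetric]
    by auto
  then have "similar_mat ?J C"
    unfolding similar_mat_def by blast
  then have "Polynomial.order 0 (char_poly ?J) = 2"
    using order by (simp add: char_poly_similar)
  moreover have "?J *\<^sub>v (T *\<^sub>v s) = 0\<^sub>v n"
  proof -
    have Ts: "T *\<^sub>v s \<in> carrier_vec n"
      using T s by simp
    have "(T * C * Tinv) *\<^sub>v (T *\<^sub>v s) = T *\<^sub>v (C *\<^sub>v (Tinv *\<^sub>v (T *\<^sub>v s)))"
      using assoc_mult_mat_vec[OF mult_carrier_mat[OF T C] Tinv Ts] assoc_mult_mat_vec[OF T C] Tinv Ts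
      by simp
    also have "Tinv *\<^sub>v (T *\<^sub>v s) = s"
      using assoc_mult_mat_vec[OF Tinv T s] s by (simp add: inv)
    also have "C *\<^sub>v s = 0\<^sub>v n"
      by (rule ker)
    also have "T *\<^sub>v 0\<^sub>v n = 0\<^sub>v n"
      using T by (intro eq_vecI) auto
    finally show ?thesis
      by (simp only: jordan)
  qed
  ultimately have "(T *\<^sub>v s) $ ((r - 2) + 2) = 0"
    using T s r n by (intro jordan_matrix_two_zero_blocks_kernel[OF _ N_def]) auto
  then show ?thesis
    using r by (simp only: le_add_diff_inverse2)
qed

lemma row_mult_eq_of_mult_mat_vec:
  fixes T P :: "complex mat"
  assumes T: "T \<in> carrier_mat n n" and P: "P \<in> carrier_mat n n" and r: "r < n"
    and coord: "\<And>v. v \<in> carrier_vec n \<Longrightarrow> (T *\<^sub>v (P *\<^sub>v v)) $ r = (T *\<^sub>v v) $ r"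
  shows "row (T * P) r = row T r"
proof (rule eq_vecI)
  fix j assume "j < dim_vec (row T r)"
  then have j: "j < n"
    using T by simp
  have "row (T * P) r $ j = (T *\<^sub>v (P *\<^sub>v unit_vec n j)) $ r"
    using T P r j by (simp flip: assoc_mult_mat_vec)
  also have "\<dots> = row T r $ j"
    using coord[of "unit_vec n j"] T r j by simp
  finally show "row (T * P) r $ j = row T r $ j" .
qed (use T P in simp)

lemma row_mult_cong:
  assumes "A \<in> carrier_mat nr n" "A' \<in> carrier_mat nr n" "B \<in> carrier_mat n nc" "i < nr"
    and "row A i = row A' i"
  shows "row (A * B) i = row (A' * B) i"
  using assms by simp

lemma del2_eq_of_rows:
  assumes X: "X \<in> carrier_mat n n" and X': "X' \<in> carrier_mat n n"
    and rows: "\<And>r. 2 \<le> r \<Longrightarrow> r < n \<Longrightarrow> row X r = row X' r"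
  shows "del2 X = del2 X'"
proof -
  have "X $$ (i + 2, j + 2) = X' $$ (i + 2, j + 2)" if "i < n - 2" "j < n - 2" for i j
  proof -
    have "row X (i + 2) $ (j + 2) = row X' (i + 2) $ (j + 2)"
      using rows[of "i + 2"] that by simp
    then show ?thesis
      using X X' that by simp
  qed
  then show ?thesis
    unfolding del2_def using X X' by (intro eq_matI) auto
qed

lemma del2_jordan_basis_mult_proj:
  fixes C T Tinv P Y :: "complex mat" and n_as :: "(nat \<times> complex) list"
  assumes C: "C \<in> carrier_mat n n" and T: "T \<in> carrier_mat n n" and Tinv: "Tinv \<in> carrier_mat n n"
    and inv: "T * Tinv = 1\<^sub>m n" "Tinv * T = 1\<^sub>m n"
    and jordan: "T * C * Tinv = jordan_matrix ((1, 0) # (1, 0) # n_as)"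
    and order: "Polynomial.order 0 (char_poly C) = 2"
    and P: "P \<in> carrier_mat n n" and proj: "\<And>v. v \<in> carrier_vec n \<Longrightarrow> C *\<^sub>v (v - P *\<^sub>v v) = 0\<^sub>v n"
    and Y: "Y \<in> carrier_mat n n"
  shows "del2 (T * P * Y) = del2 (T * Y)"
proof (rule del2_eq_of_rows)
  fix r assume r: "2 \<le> r" "r < n"
  have "row (T * P) r = row T r"
  proof (rule row_mult_eq_of_mult_mat_vec[OF T P r(2)])
    fix v :: "complex vec" assume v: "v \<in> carrier_vec n"
    have "(T *\<^sub>v (v - P *\<^sub>v v)) $ r = 0"
      using P v by (intro jordan_basis_kernel_tail_zero[OF C T Tinv inv jordan order _ proj r]) auto
    then show "(T *\<^sub>v (P *\<^sub>v v)) $ r = (T *\<^sub>v v) $ r"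
      using T P v r by (simp add: mult_minus_distrib_mat_vec)
  qed
  then show "row (T * P * Y) r = row (T * Y) r"
    using T P Y r by (intro row_mult_cong[of _ n n]) auto
qed (use T P Y in auto)

theorem proposition1:
  fixes n :: nat and E :: "(nat \<times> nat) set" and w :: "nat \<Rightarrow> nat \<Rightarrow> complex"
    and p :: "complex vec" and k :: "nat \<Rightarrow> complex"
    and T Tinv J2 P Q :: "complex mat" and n_as :: "(nat \<times> complex) list"
    and ed :: "(nat \<times> nat) list"
    and mu_t mu_r mu_s :: "nat \<Rightarrow> nat \<Rightarrow> complex"
    and v_star :: complex and a omega_r :: real
    and kappa_t kappa_r kappa_s kappa :: real
  defines "L \<equiv> cLaplacian n E w"
    and "K \<equiv> mat n n (\<lambda>(i,j). if i = j then k i else 0)"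
    and "B \<equiv> incidence n ed"
    and "Mt \<equiv> motion_mat n ed mu_t"
    and "Mr \<equiv> motion_mat n ed mu_r"
    and "Ms \<equiv> motion_mat n ed mu_s"
    and "ones \<equiv> vec n (\<lambda>_. 1 :: complex)"
  assumes n3: "n \<ge> 3"
    and graph: "undirected_graph n E"
    and p_dim: "p \<in> carrier_vec n"
    and p_not_const: "\<not> (\<exists>c. p = c \<cdot>\<^sub>v ones)"
    and w_nz: "\<forall>(i,j) \<in> E. w i j \<noteq> 0"
    and w_shape: "\<forall>i<n. (\<Sum>j\<in>nbrs E i. w i j * (p $ i - p $ j)) = 0"
    and L_alg: "Polynomial.order 0 (char_poly L) = 2"
    and L_ker: "{v \<in> carrier_vec n. L *\<^sub>v v = 0\<^sub>v n} = {c \<cdot>\<^sub>v ones + d \<cdot>\<^sub>v p | c d. True}"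
    and k_nz: "\<forall>i<n. k i \<noteq> 0"
    and KL_zero: "Polynomial.order 0 (char_poly (K * L)) = 2"
    and KL_pos: "\<forall>ev. eigenvalue (K * L) ev \<and> ev \<noteq> 0 \<longrightarrow> Re ev > 0"
    and T_dim: "T \<in> carrier_mat n n" and Tinv_dim: "Tinv \<in> carrier_mat n n"
    and T_inv: "T * Tinv = 1\<^sub>m n" "Tinv * T = 1\<^sub>m n"
    and jordan: "T * (K * L) * Tinv = jordan_matrix ((1,0) # (1,0) # n_as)"
    and J2_def: "J2 = jordan_matrix n_as"
    and P_proj: "orth_proj_perp n {v \<in> carrier_vec n. (K * L) *\<^sub>v v = 0\<^sub>v n} P"
    and orient: "orientation E ed"
    and mu_t_supp: "\<forall>i j. (i,j) \<notin> E \<longrightarrow> mu_t i j = 0"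
    and mu_r_supp: "\<forall>i j. (i,j) \<notin> E \<longrightarrow> mu_r i j = 0"
    and mu_s_supp: "\<forall>i j. (i,j) \<notin> E \<longrightarrow> mu_s i j = 0"
    and Mt_eq: "Mt * transpose_mat B *\<^sub>v p = v_star \<cdot>\<^sub>v ones"
    and Mr_eq: "Mr * transpose_mat B *\<^sub>v p = (\<i> * complex_of_real omega_r) \<cdot>\<^sub>v p"
    and Ms_eq: "Ms * transpose_mat B *\<^sub>v p = complex_of_real a \<cdot>\<^sub>v p"
    and kappas: "kappa_t > 0" "kappa_r > 0" "kappa_s > 0"
    and Q_pd: "Q \<in> carrier_mat (n-2) (n-2)" "pos_def Q"
    and Q_lyap: "loewner_ge (Q * J2 + mat_adjoint J2 * Q) (2 \<cdot>\<^sub>m 1\<^sub>m (n-2))"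
    and kappa_nn: "0 \<le> kappa"
    and kappa_bound: "kappa * spec_norm (Q * del2 (T * (complex_of_real kappa_t \<cdot>\<^sub>m Mt
                         + complex_of_real kappa_r \<cdot>\<^sub>m Mr + complex_of_real kappa_s \<cdot>\<^sub>m Ms)
                         * transpose_mat B * Tinv)) < 1"
  shows "exp_stable (- J2 + complex_of_real kappa \<cdot>\<^sub>m
           del2 (T * P * (complex_of_real kappa_t \<cdot>\<^sub>m Mt
                         + complex_of_real kappa_r \<cdot>\<^sub>m Mr + complex_of_real kappa_s \<cdot>\<^sub>m Ms)
                 * transpose_mat B * Tinv))"
proof -
  define Mtil where "Mtil = complex_of_real kappa_t \<cdot>\<^sub>m Mt
    + complex_of_real kappa_r \<cdot>\<^sub>m Mr + complex_of_real kappa_s \<cdot>\<^sub>m Ms"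
  have KL: "K * L \<in> carrier_mat n n"
    by (intro mult_carrier_mat) (auto simp: K_def L_def cLaplacian_def)
  have Mtil: "Mtil \<in> carrier_mat n (length ed)" and BT: "transpose_mat B \<in> carrier_mat (length ed) n"
    by (simp_all add: Mtil_def Mt_def Mr_def Ms_def B_def motion_mat_def incidence_def)
  then have Y: "Mtil * transpose_mat B * Tinv \<in> carrier_mat n n"
    using Tinv_dim by simp
  have P: "P \<in> carrier_mat n n"
    and proj: "\<And>v. v \<in> carrier_vec n \<Longrightarrow> (K * L) *\<^sub>v (v - P *\<^sub>v v) = 0\<^sub>v n"
    using P_proj unfolding orth_proj_perp_def by auto
  have "jordan_matrix ((1, 0) # (1, 0) # n_as) \<in> carrier_mat n n"
    unfolding jordan[symmetric] using KL T_dim Tinv_dim by simp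
  then have "n = sum_list (map fst n_as) + 2"
    by (rule jordan_matrix_two_zero_blocks_dim)
  then have J2: "J2 \<in> carrier_mat (n - 2) (n - 2)"
    by (simp add: J2_def)
  have assoc: "X * Mtil * transpose_mat B * Tinv = X * (Mtil * transpose_mat B * Tinv)"
    if "X \<in> carrier_mat n n" for X
    unfolding assoc_mult_mat[OF that Mtil BT]
    by (rule assoc_mult_mat[OF that mult_carrier_mat[OF Mtil BT] Tinv_dim])
  have "del2 (T * P * Mtil * transpose_mat B * Tinv) = del2 (T * Mtil * transpose_mat B * Tinv)"
    unfolding assoc[OF T_dim] assoc[OF mult_carrier_mat[OF T_dim P]]
    by (rule del2_jordan_basis_mult_proj[OF KL T_dim Tinv_dim T_inv jordan KL_zero P proj Y])
  moreover have "exp_stable (- J2 + complex_of_real kappa \<cdot>\<^sub>m del2 (T * Mtil * transpose_mat B * Tinv))"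
    using T_dim Mtil BT Tinv_dim kappa_bound
    by (intro exp_stable_lyapunov_perturbation[OF J2 _ Q_pd Q_lyap kappa_nn]) (auto simp: del2_def Mtil_def)
  ultimately show ?thesis
    by (simp add: Mtil_def)
qed

end
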